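(* Let $\Lambda$ be a lattice and let $B\subset\Lambda$ be a finite subset. Let $B=B_1\cup B_2$ be an integral decomposition of $B$, and let $D\subseteq B$ be an irreducible subset. Then $D\subseteq B_1$ or $D\subseteq B_2$.
   Context: A lattice is a free abelian group of finite rank. For a subset $A\subseteq\Lambda$, $\langle A\rangle_{\mathbb Z}$ denotes the subgroup generated by $A$ and $\langle A\rangle_{\mathbb C}$ the complex subspace of $\Lambda\otimes_{\mathbb Z}\mathbb C$ it spans. The completion of a subgroup $\Delta\subseteq\Lambda$ is $\overline{\Delta}=\langle\Delta\rangle_{\mathbb C}\cap\Lambda$. An integral decomposition of a finite set $B\subset\Lambda$ is a partition $B=\bigcup_i B_i$ such that $\overline{\langle B\rangle_{\mathbb Z}}=\bigoplus_i\overline{\langle B_i\rangle_{\mathbb Z}}$ (internal direct sum). $B$ is irreducible if it has no nontrivial integral decomposition. *)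

theory Defs
  imports "HOL-Analysis.Analysis"
begin

text \<open>A lattice of rank n is modelled as int ^ 'n (free abelian group Z^n);
  its complexification is complex ^ 'n.\<close>

definition lat_to_C :: "int ^ 'n \<Rightarrow> complex ^ 'n" where
  "lat_to_C v = (\<chi> i. of_int (v $ i))"

definition zspan :: "(int ^ 'n) set \<Rightarrow> (int ^ 'n) set" where
  "zspan A = module.span ((*s) :: int \<Rightarrow> int ^ 'n \<Rightarrow> int ^ 'n) A"

definition cspan :: "(int ^ 'n) set \<Rightarrow> (complex ^ 'n) set" where
  "cspan A = module.span ((*s) :: complex \<Rightarrow> complex ^ 'n \<Rightarrow> complex ^ 'n) (lat_to_C ` A)"

definition completion :: "(int ^ 'n) set \<Rightarrow> (int ^ 'n) set" where
  "completion \<Delta> = {v. lat_to_C v \<in> cspan \<Delta>}"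

definition internal_direct_sum :: "(int ^ 'n) set \<Rightarrow> 'i set \<Rightarrow> ('i \<Rightarrow> (int ^ 'n) set) \<Rightarrow> bool" where
  "internal_direct_sum L P G \<longleftrightarrow>
     (\<forall>f. (\<forall>p\<in>P. f p \<in> G p) \<longrightarrow> (\<Sum>p\<in>P. f p) \<in> L) \<and>
     (\<forall>x\<in>L. \<exists>!f. (\<forall>p\<in>P. f p \<in> G p) \<and> (\<forall>p. p \<notin> P \<longrightarrow> f p = 0) \<and> x = (\<Sum>p\<in>P. f p))"

definition is_partition :: "'a set \<Rightarrow> 'a set set \<Rightarrow> bool" where
  "is_partition B P \<longleftrightarrow> \<Union>P = B \<and> {} \<notin> P \<and> (\<forall>p\<in>P. \<forall>q\<in>P. p \<noteq> q \<longrightarrow> p \<inter> q = {})"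

definition integral_decomposition :: "(int ^ 'n) set \<Rightarrow> (int ^ 'n) set set \<Rightarrow> bool" where
  "integral_decomposition B P \<longleftrightarrow> is_partition B P \<and>
     internal_direct_sum (completion (zspan B)) P (\<lambda>p. completion (zspan p))"

definition irreducible_set :: "(int ^ 'n) set \<Rightarrow> bool" where
  "irreducible_set B \<longleftrightarrow> \<not> (\<exists>P. integral_decomposition B P \<and> card P \<ge> 2)"

end

theory Submission imports Defs begin

text \<open>Write \<open>C(S)\<close> for the completion of \<open>\<langle>S\<rangle>\<^sub>\<int>\<close>. Completions are saturated: if
  \<open>N x \<in> C(S)\<close> with \<open>N \<noteq> 0\<close> then \<open>x \<in> C(S)\<close>; conversely every \<open>x \<in> C(S)\<close> has a nonzero
  multiple in \<open>\<langle>S\<rangle>\<^sub>\<int>\<close> (apply a \<open>\<rat>\<close>-linear functional \<open>\<complex> \<rightarrow> \<rat>\<close> fixing 1 to a complex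
  expansion of \<open>x\<close> and clear denominators). Now suppose \<open>D\<close> meets both \<open>B\<^sub>1\<close> and \<open>B\<^sub>2\<close>, and put
  \<open>D\<^sub>i = D \<inter> B\<^sub>i\<close>. For \<open>x \<in> C(D)\<close> choose \<open>N x = w\<^sub>1 + w\<^sub>2\<close> with \<open>w\<^sub>i \<in> \<langle>D\<^sub>i\<rangle>\<^sub>\<int>\<close>, and write
  \<open>x = y\<^sub>1 + y\<^sub>2\<close> with \<open>y\<^sub>i \<in> C(B\<^sub>i)\<close>. Uniqueness in \<open>C(B) = C(B\<^sub>1) \<oplus> C(B\<^sub>2)\<close> gives
  \<open>N y\<^sub>i = w\<^sub>i\<close>, so \<open>y\<^sub>i \<in> C(D\<^sub>i)\<close> by saturation. Hence \<open>C(D) = C(D\<^sub>1) \<oplus> C(D\<^sub>2)\<close>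
  is a nontrivial integral decomposition of \<open>D\<close>.\<close>

lemma exists_rat_linear_functional_complex:
  "\<exists>g :: complex \<Rightarrow> rat. Modules.additive g \<and> (\<forall>q z. g (of_rat q * z) = q * g z) \<and> g 1 = 1"
proof -
  interpret p: vector_space_pair "\<lambda>(q::rat) (z::complex). of_rat q * z" "(*) :: rat \<Rightarrow> rat \<Rightarrow> rat"
    by unfold_locales (auto simp: algebra_simps of_rat_add of_rat_mult)
  have "p.vs1.independent {1}"
    by (rule p.vs1.independent_insertI) (auto simp: p.vs1.independent_empty)
  from p.linear_independent_extend[OF this, of "\<lambda>_. 1"] obtain g where
    "Vector_Spaces.linear (\<lambda>(q::rat) (z::complex). of_rat q * z) (*) g" and g1: "g 1 = 1"
    by auto
  then have "module_hom (\<lambda>(q::rat) (z::complex). of_rat q * z) (*) g"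
    using module_hom_iff_linear by blast
  then have "Modules.additive g" "\<forall>q z. g (of_rat q * z) = q * g z"
    by (auto intro: additive.intro dest: module_hom.add module_hom.scale)
  with g1 show ?thesis by blast
qed

lemma common_denominator:
  fixes h :: "'a \<Rightarrow> rat"
  assumes "finite A"
  shows "\<exists>N::int. N > 0 \<and> (\<forall>a\<in>A. of_int N * h a \<in> \<int>)"
  using assms
proof (induction A rule: finite_induct)
  case empty
  show ?case by (intro exI[of _ 1]) auto
next
  case (insert x A)
  then obtain N where N: "N > 0" "\<forall>a\<in>A. of_int N * h a \<in> \<int>" by blast
  obtain p q where "quotient_of (h x) = (p, q)" by (cases "quotient_of (h x)")
  then have q: "q > 0" "h x = of_int p / of_int q"
    using quotient_of_denom_pos quotient_of_div by blast+
  have "of_int (N * q) * h a \<in> \<int>" if "a \<in> insert x A" for a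
  proof (cases "a = x")
    case True
    with q show ?thesis by simp
  next
    case False
    with that N have "of_int q * (of_int N * h a) \<in> \<int>" by simp
    then show ?thesis by (simp add: mult_ac)
  qed
  with N q show ?case by (intro exI[of _ "N * q"]) simp
qed

lemma lat_to_C_nth [simp]: "lat_to_C v $ i = of_int (v $ i)"
  by (simp add: lat_to_C_def)

lemma lat_to_C_add: "lat_to_C (a + b) = lat_to_C a + lat_to_C b"
  by (simp add: vec_eq_iff)

lemma lat_to_C_scale: "lat_to_C (k *s a) = of_int k *s lat_to_C a"
  by (simp add: vec_eq_iff)

interpretation zmod: module "(*s) :: int \<Rightarrow> int ^ 'n \<Rightarrow> int ^ 'n"
  by unfold_locales (vector algebra_simps)+

lemma zspan_Un: "zspan (A \<union> B) = {x + y | x y. x \<in> zspan A \<and> y \<in> zspan B}"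
  unfolding zspan_def by (rule zmod.span_Un)

lemma zspan_subset_completion: "zspan S \<subseteq> completion (zspan S)"
  by (auto simp: completion_def cspan_def vec.span_base)

lemma completion_zspan_mono:
  assumes "S \<subseteq> T"
  shows "completion (zspan S) \<subseteq> completion (zspan T)"
proof -
  have "zspan S \<subseteq> zspan T"
    unfolding zspan_def using assms by (rule zmod.span_mono)
  then show ?thesis
    unfolding completion_def cspan_def by (auto dest: vec.span_mono[OF image_mono])
qed

lemma completion_add: "a \<in> completion S \<Longrightarrow> b \<in> completion S \<Longrightarrow> a + b \<in> completion S"
  by (simp add: completion_def cspan_def lat_to_C_add vec.span_add)

lemma completion_scale: "a \<in> completion S \<Longrightarrow> k *s a \<in> completion S"
  by (simp add: completion_def cspan_def lat_to_C_scale vec.span_scale)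

lemma completion_cancel_scale:
  assumes "N \<noteq> 0" and "N *s y \<in> completion S"
  shows "y \<in> completion S"
proof -
  have "lat_to_C y = (1 / of_int N) *s lat_to_C (N *s y)"
    using assms(1) by (simp add: lat_to_C_scale vec_eq_iff)
  with assms(2) show ?thesis by (simp add: completion_def cspan_def vec.span_scale)
qed

lemma completion_zspan_multiple_in_zspan:
  assumes "x \<in> completion (zspan T)"
  shows "\<exists>N::int. N > 0 \<and> N *s x \<in> zspan T"
proof -
  from assms obtain t r where t: "finite t" "t \<subseteq> lat_to_C ` zspan T"
    and x: "lat_to_C x = (\<Sum>a\<in>t. r a *s a)"
    unfolding completion_def cspan_def vec.span_explicit by blast
  obtain pre where pre: "\<And>a. a \<in> t \<Longrightarrow> pre a \<in> zspan T \<and> lat_to_C (pre a) = a"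
    using t(2) by (metis f_inv_into_f inv_into_into subsetD)
  obtain g :: "complex \<Rightarrow> rat" where g: "Modules.additive g" "\<And>q z. g (of_rat q * z) = q * g z" "g 1 = 1"
    using exists_rat_linear_functional_complex by blast
  have g_int: "g (of_int k * z) = of_int k * g z" for k z
    using g(2)[of "of_int k" z] by simp
  obtain N where N: "N > 0" "\<forall>a\<in>t. of_int N * g (r a) \<in> \<int>"
    using common_denominator[OF t(1), of "\<lambda>a. g (r a)"] by blast
  define m where "m a = \<lfloor>of_int N * g (r a)\<rfloor>" for a
  have m: "of_int (m a) = of_int N * g (r a)" if "a \<in> t" for a
    using N(2) that unfolding m_def by (metis Ints_cases floor_of_int)
  have "N *s x = (\<Sum>a\<in>t. m a *s pre a)"
    unfolding vec_eq_iff
  proof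
    fix i
    have coord: "a $ i = of_int (pre a $ i)" if "a \<in> t" for a
      using pre[OF that] by (metis lat_to_C_nth)
    have "of_int (x $ i) = (\<Sum>a\<in>t. r a * a $ i)"
      using arg_cong[OF x, of "\<lambda>v. v $ i"] by simp
    also have "\<dots> = (\<Sum>a\<in>t. of_int (pre a $ i) * r a)"
      by (rule sum.cong) (simp_all add: coord mult.commute)
    finally have "g (of_int (x $ i)) = (\<Sum>a\<in>t. of_int (pre a $ i) * g (r a))"
      by (simp add: additive.sum[OF g(1)] g_int)
    then have "(of_int (x $ i) :: rat) = (\<Sum>a\<in>t. of_int (pre a $ i) * g (r a))"
      using g_int[of _ 1] g(3) by simp
    then have "of_int N * of_int (x $ i) = (\<Sum>a\<in>t. of_int (m a * pre a $ i) :: rat)"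
      by (simp add: sum_distrib_left m mult_ac cong: sum.cong)
    then show "(N *s x) $ i = (\<Sum>a\<in>t. m a *s pre a) $ i"
      by (simp flip: of_int_mult of_int_sum)
  qed
  moreover have "(\<Sum>a\<in>t. m a *s pre a) \<in> zspan T"
    using pre unfolding zspan_def by (intro zmod.span_sum zmod.span_scale) (auto simp: zspan_def)
  ultimately show ?thesis using N(1) by auto
qed

lemma internal_direct_sum_pair_iff:
  fixes L :: "(int ^ 'n) set"
  assumes "P1 \<noteq> P2"
  shows "internal_direct_sum L {P1, P2} G \<longleftrightarrow>
    (\<forall>a1\<in>G P1. \<forall>a2\<in>G P2. a1 + a2 \<in> L) \<and>
    (\<forall>x\<in>L. \<exists>a1\<in>G P1. \<exists>a2\<in>G P2. x = a1 + a2) \<and>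
    (\<forall>a1\<in>G P1. \<forall>a2\<in>G P2. \<forall>b1\<in>G P1. \<forall>b2\<in>G P2.
       a1 + a2 \<in> L \<longrightarrow> a1 + a2 = b1 + b2 \<longrightarrow> a1 = b1 \<and> a2 = b2)"
  (is "_ \<longleftrightarrow> ?closed \<and> ?onto \<and> ?unique")
proof -
  define pair where "pair a1 a2 p = (if p = P1 then a1 else if p = P2 then a2 else 0)"
    for a1 a2 :: "int ^ 'n" and p
  have decomposes_iff: "(\<forall>p\<in>{P1, P2}. f p \<in> G p) \<and> (\<forall>p. p \<notin> {P1, P2} \<longrightarrow> f p = 0) \<and>
      x = (\<Sum>p\<in>{P1, P2}. f p) \<longleftrightarrow> (\<exists>a1\<in>G P1. \<exists>a2\<in>G P2. f = pair a1 a2 \<and> x = a1 + a2)" for f x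
    using assms by (auto simp: pair_def fun_eq_iff)
  have pair_eq_iff: "pair a1 a2 = pair b1 b2 \<longleftrightarrow> a1 = b1 \<and> a2 = b2" for a1 a2 b1 b2
    using assms by (auto simp: pair_def fun_eq_iff)
  have closed_iff: "(\<forall>f. (\<forall>p\<in>{P1, P2}. f p \<in> G p) \<longrightarrow> (\<Sum>p\<in>{P1, P2}. f p) \<in> L) \<longleftrightarrow> ?closed"
  proof
    assume "\<forall>f. (\<forall>p\<in>{P1, P2}. f p \<in> G p) \<longrightarrow> (\<Sum>p\<in>{P1, P2}. f p) \<in> L"
    then show ?closed
      using assms by (auto dest: spec[of _ "pair _ _"] simp: pair_def)
  qed (use assms in auto)
  have "internal_direct_sum L {P1, P2} G \<longleftrightarrow> ?closed \<and>
      (\<forall>x\<in>L. \<exists>!f. \<exists>a1\<in>G P1. \<exists>a2\<in>G P2. f = pair a1 a2 \<and> x = a1 + a2)"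
    unfolding internal_direct_sum_def closed_iff decomposes_iff ..
  also have "\<dots> \<longleftrightarrow> ?closed \<and> ?onto \<and> ?unique"
    by (auto simp: pair_eq_iff) (metis pair_eq_iff)+
  finally show ?thesis .
qed

lemma internal_direct_sum_completion_restrict:
  fixes B B1 B2 D :: "(int ^ 'n) set"
  defines "C S \<equiv> completion (zspan S)"
  assumes ids: "internal_direct_sum (C B) {B1, B2} C"
    and "B1 \<noteq> B2" and "D \<subseteq> B" and "D \<subseteq> B1 \<union> B2" and "D \<inter> B1 \<noteq> D \<inter> B2"
  shows "internal_direct_sum (C D) {D \<inter> B1, D \<inter> B2} C"
proof -
  have mono: "C S \<subseteq> C T" if "S \<subseteq> T" for S T
    unfolding C_def using that by (rule completion_zspan_mono)
  have CD: "C (D \<inter> B1) \<subseteq> C D" "C (D \<inter> B2) \<subseteq> C D" "C D \<subseteq> C B"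
    and CB: "C (D \<inter> B1) \<subseteq> C B1" "C (D \<inter> B2) \<subseteq> C B2"
    using \<open>D \<subseteq> B\<close> by (auto intro!: mono)
  have onto_B: "\<exists>y1\<in>C B1. \<exists>y2\<in>C B2. x = y1 + y2" if "x \<in> C B" for x
    using ids that by (simp add: internal_direct_sum_pair_iff[OF \<open>B1 \<noteq> B2\<close>])
  have unique_B: "a1 = b1 \<and> a2 = b2"
    if "a1 \<in> C B1" "a2 \<in> C B2" "b1 \<in> C B1" "b2 \<in> C B2" "a1 + a2 \<in> C B" "a1 + a2 = b1 + b2"
    for a1 a2 b1 b2
    using ids that by (simp add: internal_direct_sum_pair_iff[OF \<open>B1 \<noteq> B2\<close>])
  have onto_D: "\<exists>y1\<in>C (D \<inter> B1). \<exists>y2\<in>C (D \<inter> B2). x = y1 + y2" if x: "x \<in> C D" for x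
  proof -
    obtain y1 y2 where y: "y1 \<in> C B1" "y2 \<in> C B2" "x = y1 + y2"
      using onto_B x CD(3) by blast
    obtain N :: int where N: "N > 0" "N *s x \<in> zspan D"
      using completion_zspan_multiple_in_zspan x unfolding C_def by blast
    have "zspan D = zspan ((D \<inter> B1) \<union> (D \<inter> B2))"
      using \<open>D \<subseteq> B1 \<union> B2\<close> by (metis Int_Un_distrib inf.absorb1)
    with N(2) obtain w1 w2 where w: "w1 \<in> zspan (D \<inter> B1)" "w2 \<in> zspan (D \<inter> B2)" "N *s x = w1 + w2"
      unfolding zspan_Un by blast
    have w_C: "w1 \<in> C (D \<inter> B1)" "w2 \<in> C (D \<inter> B2)"
      using w zspan_subset_completion unfolding C_def by blast+
    have Nx: "N *s x = N *s y1 + N *s y2"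
      using y(3) by simp
    have "N *s y1 = w1 \<and> N *s y2 = w2"
    proof (rule unique_B)
      show "N *s y1 \<in> C B1" "N *s y2 \<in> C B2"
        using y completion_scale unfolding C_def by blast+
      show "N *s y1 + N *s y2 \<in> C B"
        using x CD(3) completion_scale[of x "zspan B" N] Nx unfolding C_def by auto
      show "N *s y1 + N *s y2 = w1 + w2"
        using w(3) Nx by simp
    qed (use w_C CB in blast)+
    with w_C have "y1 \<in> C (D \<inter> B1)" "y2 \<in> C (D \<inter> B2)"
      using completion_cancel_scale[of N] N(1) unfolding C_def by auto
    with y(3) show ?thesis by blast
  qed
  have closed_D: "a1 + a2 \<in> C D" if "a1 \<in> C (D \<inter> B1)" "a2 \<in> C (D \<inter> B2)" for a1 a2
    using that CD(1,2) completion_add unfolding C_def by blast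
  have unique_D: "a1 = b1 \<and> a2 = b2"
    if "a1 \<in> C (D \<inter> B1)" "a2 \<in> C (D \<inter> B2)" "b1 \<in> C (D \<inter> B1)" "b2 \<in> C (D \<inter> B2)"
      "a1 + a2 \<in> C D" "a1 + a2 = b1 + b2" for a1 a2 b1 b2
    using that CB CD(3) by (intro unique_B) blast+
  show ?thesis
    unfolding internal_direct_sum_pair_iff[OF \<open>D \<inter> B1 \<noteq> D \<inter> B2\<close>]
    using closed_D onto_D unique_D by blast
qed

lemma integral_decomposition_restrict:
  assumes "integral_decomposition B {B1, B2}" and "D \<subseteq> B"
    and "\<not> D \<subseteq> B1" and "\<not> D \<subseteq> B2"
  shows "integral_decomposition D {D \<inter> B1, D \<inter> B2}" and "card {D \<inter> B1, D \<inter> B2} = 2"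
proof -
  have part: "is_partition B {B1, B2}"
    and ids: "internal_direct_sum (completion (zspan B)) {B1, B2} (\<lambda>S. completion (zspan S))"
    using assms(1) unfolding integral_decomposition_def by auto
  have "B = B1 \<union> B2" and "B1 \<noteq> B2"
    using part assms(2-4) unfolding is_partition_def by auto
  then have "B1 \<inter> B2 = {}"
    using part unfolding is_partition_def by auto
  with \<open>B = B1 \<union> B2\<close> assms(2-4) have "is_partition D {D \<inter> B1, D \<inter> B2}"
    and "D \<inter> B1 \<noteq> D \<inter> B2"
    unfolding is_partition_def by auto
  moreover have "internal_direct_sum (completion (zspan D)) {D \<inter> B1, D \<inter> B2} (\<lambda>S. completion (zspan S))"
    using internal_direct_sum_completion_restrict[OF ids \<open>B1 \<noteq> B2\<close> assms(2)]
      \<open>B = B1 \<union> B2\<close> assms(2) \<open>D \<inter> B1 \<noteq> D \<inter> B2\<close> by blast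
  ultimately show "integral_decomposition D {D \<inter> B1, D \<inter> B2}"
    unfolding integral_decomposition_def by blast
  from \<open>D \<inter> B1 \<noteq> D \<inter> B2\<close> show "card {D \<inter> B1, D \<inter> B2} = 2"
    by simp
qed

theorem lemma3p3:
  fixes B B1 B2 D :: "(int ^ 'n) set"
  assumes "finite B"
    and "integral_decomposition B {B1, B2}"
    and "D \<subseteq> B"
    and "irreducible_set D"
  shows "D \<subseteq> B1 \<or> D \<subseteq> B2"
proof (rule ccontr)
  assume "\<not> (D \<subseteq> B1 \<or> D \<subseteq> B2)"
  then have "integral_decomposition D {D \<inter> B1, D \<inter> B2}" and "card {D \<inter> B1, D \<inter> B2} = 2"
    using integral_decomposition_restrict[OF assms(2,3)] by auto
  with assms(4) show False
    unfolding irreducible_set_def by (metis order_refl)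
qed

end
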